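(* Let $\Gamma$ be a hyperbolic group such that $\mathrm{Out}(\Gamma)$ is infinite, and let $S$ be any finite generating set of $\Gamma$. Then $\mathcal{B}_S=S\cup\{ss'\mid s,s'\in S,\ s\neq s'\}$ is a test subset: for every sequence $(\phi_n)$ of distinct elements of $\mathrm{Out}(\Gamma)$ there is $b\in\mathcal{B}_S$ with $\limsup_n l_S(\phi_n(b))=\infty$.
   Context: $l_S(\gamma)=\min_{g\in\Gamma}|g\gamma g^{-1}|_S$ is the translation length of $\gamma$ on the Cayley graph $C_S(\Gamma)$ (well defined on outer automorphism classes), $|\cdot|_S$ the word length. *)

theory Defs
  imports Complex_Main "HOL-Algebra.Generated_Groups" "HOL-Library.Liminf_Limsup" "HOL-Library.Extended_Real"
begin

definition word_length :: "('a, 'b) monoid_scheme \<Rightarrow> 'a set \<Rightarrow> 'a \<Rightarrow> nat" where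
  "word_length G S g = (LEAST n. \<exists>ws. length ws = n \<and> set ws \<subseteq> S \<union> m_inv G ` S
      \<and> foldr (\<lambda>a b. a \<otimes>\<^bsub>G\<^esub> b) ws \<one>\<^bsub>G\<^esub> = g)"

definition word_dist :: "('a, 'b) monoid_scheme \<Rightarrow> 'a set \<Rightarrow> 'a \<Rightarrow> 'a \<Rightarrow> real" where
  "word_dist G S x y = real (word_length G S (inv\<^bsub>G\<^esub> x \<otimes>\<^bsub>G\<^esub> y))"

definition gromov_product :: "('a, 'b) monoid_scheme \<Rightarrow> 'a set \<Rightarrow> 'a \<Rightarrow> 'a \<Rightarrow> 'a \<Rightarrow> real" where
  "gromov_product G S w x y = (word_dist G S w x + word_dist G S w y - word_dist G S x y) / 2"

definition finite_generating_set :: "('a, 'b) monoid_scheme \<Rightarrow> 'a set \<Rightarrow> bool" where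
  "finite_generating_set G S \<longleftrightarrow> finite S \<and> S \<subseteq> carrier G \<and> generate G S = carrier G"

definition hyperbolic_group :: "('a, 'b) monoid_scheme \<Rightarrow> bool" where
  "hyperbolic_group G \<longleftrightarrow> group G \<and> (\<exists>S \<delta>. finite_generating_set G S \<and>
     (\<forall>w\<in>carrier G. \<forall>x\<in>carrier G. \<forall>y\<in>carrier G. \<forall>z\<in>carrier G.
        gromov_product G S w x z \<ge> min (gromov_product G S w x y) (gromov_product G S w y z) - \<delta>))"

definition transl_length :: "('a, 'b) monoid_scheme \<Rightarrow> 'a set \<Rightarrow> 'a \<Rightarrow> nat" where
  "transl_length G S \<gamma> = (LEAST n. \<exists>g\<in>carrier G. n = word_length G S (g \<otimes>\<^bsub>G\<^esub> \<gamma> \<otimes>\<^bsub>G\<^esub> inv\<^bsub>G\<^esub> g))"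

definition out_equiv :: "('a, 'b) monoid_scheme \<Rightarrow> ('a \<Rightarrow> 'a) \<Rightarrow> ('a \<Rightarrow> 'a) \<Rightarrow> bool" where
  "out_equiv G \<phi> \<psi> \<longleftrightarrow> (\<exists>g\<in>carrier G. \<forall>x\<in>carrier G. \<phi> x = g \<otimes>\<^bsub>G\<^esub> \<psi> x \<otimes>\<^bsub>G\<^esub> inv\<^bsub>G\<^esub> g)"

definition Out :: "('a, 'b) monoid_scheme \<Rightarrow> ('a \<Rightarrow> 'a) set set" where
  "Out G = (\<lambda>\<phi>. {\<psi> \<in> iso G G. out_equiv G \<phi> \<psi>}) ` iso G G"

definition test_set_B :: "('a, 'b) monoid_scheme \<Rightarrow> 'a set \<Rightarrow> 'a set" where
  "test_set_B G S = S \<union> {s \<otimes>\<^bsub>G\<^esub> s' | s s'. s \<in> S \<and> s' \<in> S \<and> s \<noteq> s'}"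

end

theory Submission
  imports Defs
begin

text \<open>
  Suppose every element of \<open>B\<^sub>S\<close> had bounded translation length along \<open>(\<phi>\<^sub>n)\<close>. Word metrics
  of different finite generating sets are bi-Lipschitz equivalent, so for a \<open>\<delta>\<close>-hyperbolic word
  metric every \<open>\<phi>\<^sub>n(b)\<close>, \<open>b \<in> B\<^sub>S\<close>, has an almost fixed point whose displacement is bounded
  independently of \<open>n\<close>. A ping-pong argument shows that if \<open>a\<close>, \<open>b\<close> and \<open>ab\<close> all have such
  points, then every point of a geodesic joining almost fixed points of \<open>a\<close> and \<open>b\<close> is moved
  little by \<open>a\<close> or by \<open>b\<close>; walking along the geodesic yields a common almost fixed point.
  Inductively, all \<open>\<phi>\<^sub>n(s)\<close>, \<open>s \<in> S\<close>, have a common almost fixed point \<open>x\<^sub>n\<close> with uniformly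
  bounded displacement. Conjugating by \<open>x\<^sub>n\<close> maps \<open>S\<close> into a fixed finite ball, so two of the
  \<open>\<phi>\<^sub>n\<close> differ by an inner automorphism.
\<close>

section \<open>Automorphisms and conjugation\<close>

lemma (in group) transl_length_attained:
  obtains g where "g \<in> carrier G" "word_length G S (g \<otimes> \<gamma> \<otimes> inv g) = transl_length G S \<gamma>"
proof -
  have "\<exists>k. \<exists>g\<in>carrier G. k = word_length G S (g \<otimes> \<gamma> \<otimes> inv g)"
    by blast
  from LeastI_ex[OF this] show ?thesis
    using that unfolding transl_length_def by metis
qed

lemma (in group) hom_eq_on_generate:
  assumes f: "f \<in> hom G H" and g: "g \<in> hom G H" and H: "group H"
    and T: "T \<subseteq> carrier G" and agree: "\<And>s. s \<in> T \<Longrightarrow> f s = g s"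
    and y: "y \<in> generate G T"
  shows "f y = g y"
proof -
  have hom: "group_hom G H f" "group_hom G H g"
    using f g H by (simp_all add: group_hom_def group_hom_axioms_def is_group)
  from y show ?thesis
  proof (induct y rule: generate.induct)
    case one
    show ?case using group_hom.hom_one[OF hom(1)] group_hom.hom_one[OF hom(2)] by simp
  next
    case (incl h)
    then show ?case by (rule agree)
  next
    case (inv h)
    then show ?case using group_hom.hom_inv[OF hom(1)] group_hom.hom_inv[OF hom(2)] T agree by auto
  next
    case (eng h1 h2)
    then have "h1 \<in> carrier G" "h2 \<in> carrier G"
      using generate_in_carrier[OF T] by auto
    then show ?case using eng hom_mult[OF f] hom_mult[OF g] by simp
  qed
qed

lemma (in group) conjugate_hom:
  assumes f: "f \<in> hom G G" and X: "X \<in> carrier G"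
  shows "(\<lambda>y. inv X \<otimes> f y \<otimes> X) \<in> hom G G"
proof (rule homI)
  fix x y assume "x \<in> carrier G" "y \<in> carrier G"
  then have "f x \<in> carrier G" "f y \<in> carrier G" "f (x \<otimes> y) = f x \<otimes> f y"
    using hom_in_carrier[OF f] hom_mult[OF f] by auto
  then show "inv X \<otimes> f (x \<otimes> y) \<otimes> X = inv X \<otimes> f x \<otimes> X \<otimes> (inv X \<otimes> f y \<otimes> X)"
    using X by (simp add: m_assoc) (simp add: m_assoc[symmetric])
qed (use hom_in_carrier[OF f] X in auto)

lemma (in group) out_equiv_if_conjugates_agree:
  assumes f: "f \<in> hom G G" and g: "g \<in> hom G G" and XY: "X \<in> carrier G" "Y \<in> carrier G"
    and T: "T \<subseteq> carrier G" "generate G T = carrier G"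
    and agree: "\<And>s. s \<in> T \<Longrightarrow> inv X \<otimes> f s \<otimes> X = inv Y \<otimes> g s \<otimes> Y"
  shows "out_equiv G f g"
  unfolding out_equiv_def
proof (intro bexI ballI)
  fix y assume y: "y \<in> carrier G"
  then have conj: "inv X \<otimes> f y \<otimes> X = inv Y \<otimes> g y \<otimes> Y"
    using hom_eq_on_generate[OF conjugate_hom[OF f XY(1)] conjugate_hom[OF g XY(2)] is_group T(1) agree] T(2)
    by simp
  have fy: "f y \<in> carrier G" "g y \<in> carrier G"
    using hom_in_carrier[OF f] hom_in_carrier[OF g] y by auto
  have "f y = X \<otimes> (inv X \<otimes> f y \<otimes> X) \<otimes> inv X"
    using XY fy by (simp add: m_assoc) (simp add: m_assoc[symmetric])
  also have "\<dots> = (X \<otimes> inv Y) \<otimes> g y \<otimes> inv (X \<otimes> inv Y)"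
    unfolding conj using XY fy by (simp add: m_assoc inv_mult_group)
  finally show "f y = (X \<otimes> inv Y) \<otimes> g y \<otimes> inv (X \<otimes> inv Y)" .
qed (use XY in simp)

section \<open>Word metrics\<close>

definition displacement :: "('a, 'b) monoid_scheme \<Rightarrow> 'a set \<Rightarrow> 'a \<Rightarrow> 'a \<Rightarrow> real" where
  "displacement G S g x = word_dist G S x (g \<otimes>\<^bsub>G\<^esub> x)"

locale word_metric = group +
  fixes S :: "'a set"
  assumes generators_closed: "S \<subseteq> carrier G" and generate_eq_carrier: "generate G S = carrier G"
begin

abbreviation word_prod :: "'a list \<Rightarrow> 'a" where "word_prod ws \<equiv> foldr (\<lambda>a b. a \<otimes> b) ws \<one>"

abbreviation letters :: "'a set" where "letters \<equiv> S \<union> m_inv G ` S"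

abbreviation wl :: "'a \<Rightarrow> nat" where "wl \<equiv> word_length G S"

abbreviation d :: "'a \<Rightarrow> 'a \<Rightarrow> real" where "d \<equiv> word_dist G S"

abbreviation D :: "'a \<Rightarrow> 'a \<Rightarrow> real" where "D \<equiv> displacement G S"

abbreviation gp :: "'a \<Rightarrow> 'a \<Rightarrow> 'a \<Rightarrow> real" where "gp \<equiv> gromov_product G S"

lemma letters_closed: "letters \<subseteq> carrier G"
  using generators_closed by auto

lemma word_prod_closed: "set ws \<subseteq> carrier G \<Longrightarrow> word_prod ws \<in> carrier G"
  by (induct ws) auto

lemma word_prod_append:
  "set ws \<subseteq> carrier G \<Longrightarrow> set vs \<subseteq> carrier G \<Longrightarrow> word_prod (ws @ vs) = word_prod ws \<otimes> word_prod vs"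
  by (induct ws) (auto simp: m_assoc word_prod_closed)

lemma word_prod_rev_inv:
  "set ws \<subseteq> carrier G \<Longrightarrow> word_prod (rev (map (m_inv G) ws)) = inv (word_prod ws)"
proof (induct ws)
  case (Cons a ws)
  then have "word_prod (rev (map (m_inv G) (a # ws))) = inv (word_prod ws) \<otimes> inv a"
    using word_prod_append[of "rev (map (m_inv G) ws)" "[inv a]"] by (auto simp del: foldr_append)
  then show ?case
    using Cons by (simp add: inv_mult_group word_prod_closed)
qed simp

lemma word_length_le: "set ws \<subseteq> letters \<Longrightarrow> wl (word_prod ws) \<le> length ws"
  unfolding word_length_def by (rule Least_le) auto

lemma word_exists: "g \<in> carrier G \<Longrightarrow> \<exists>ws. set ws \<subseteq> letters \<and> word_prod ws = g"
  unfolding generate_eq_carrier[symmetric]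
proof (induct g rule: generate.induct)
  case one
  show ?case by (intro exI[of _ "[]"]) auto
next
  case (incl h)
  then show ?case using generators_closed by (intro exI[of _ "[h]"]) auto
next
  case (inv h)
  then show ?case using generators_closed by (intro exI[of _ "[inv h]"]) auto
next
  case (eng h1 h2)
  then obtain ws vs where "set ws \<subseteq> letters" "word_prod ws = h1" "set vs \<subseteq> letters" "word_prod vs = h2"
    by blast
  then show ?case
    using letters_closed word_prod_append[of ws vs]
    by (intro exI[of _ "ws @ vs"]) (auto simp del: foldr_append)
qed

lemma word_length_attained:
  assumes "g \<in> carrier G"
  obtains ws where "length ws = wl g" "set ws \<subseteq> letters" "word_prod ws = g"
proof -
  have "\<exists>n ws. length ws = n \<and> set ws \<subseteq> letters \<and> word_prod ws = g"
    using word_exists[OF assms] by blast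
  from LeastI_ex[OF this] show ?thesis
    using that unfolding word_length_def by blast
qed

lemma word_length_one: "wl \<one> = 0"
  using word_length_le[of "[]"] by simp

lemma word_length_eq_0_iff: "g \<in> carrier G \<Longrightarrow> wl g = 0 \<longleftrightarrow> g = \<one>"
  using word_length_one by (metis length_0_conv foldr.simps(1) id_apply word_length_attained)

lemma word_length_mult:
  assumes "g \<in> carrier G" "h \<in> carrier G"
  shows "wl (g \<otimes> h) \<le> wl g + wl h"
proof -
  obtain ws where ws: "length ws = wl g" "set ws \<subseteq> letters" "word_prod ws = g"
    using word_length_attained assms(1) by blast
  obtain vs where vs: "length vs = wl h" "set vs \<subseteq> letters" "word_prod vs = h"
    using word_length_attained assms(2) by blast
  have "word_prod (ws @ vs) = g \<otimes> h"
    using ws vs letters_closed word_prod_append[of ws vs] by (auto simp del: foldr_append)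
  then show ?thesis
    using word_length_le[of "ws @ vs"] ws vs by auto
qed

lemma word_length_inv_le:
  assumes "g \<in> carrier G"
  shows "wl (inv g) \<le> wl g"
proof -
  obtain ws where ws: "length ws = wl g" "set ws \<subseteq> letters" "word_prod ws = g"
    using word_length_attained assms by blast
  have "set (rev (map (m_inv G) ws)) \<subseteq> letters"
    using ws(2) generators_closed by (auto simp: subset_iff)
  moreover have "word_prod (rev (map (m_inv G) ws)) = inv g"
    using word_prod_rev_inv ws letters_closed by auto
  ultimately show ?thesis
    using word_length_le[of "rev (map (m_inv G) ws)"] ws by auto
qed

lemma word_length_inv: "g \<in> carrier G \<Longrightarrow> wl (inv g) = wl g"
  using word_length_inv_le[of g] word_length_inv_le[of "inv g"] by force

lemma finite_word_length_le:
  assumes "finite S"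
  shows "finite {g \<in> carrier G. wl g \<le> N}"
proof (rule finite_subset)
  show "{g \<in> carrier G. wl g \<le> N} \<subseteq> word_prod ` {ws. set ws \<subseteq> letters \<and> length ws \<le> N}"
  proof
    fix g assume "g \<in> {g \<in> carrier G. wl g \<le> N}"
    then obtain ws where "length ws = wl g" "set ws \<subseteq> letters" "word_prod ws = g" "wl g \<le> N"
      using word_length_attained by blast
    then show "g \<in> word_prod ` {ws. set ws \<subseteq> letters \<and> length ws \<le> N}" by force
  qed
  show "finite (word_prod ` {ws. set ws \<subseteq> letters \<and> length ws \<le> N})"
    using finite_lists_length_le[of letters N] assms by simp
qed

lemma word_dist_nonneg: "0 \<le> d x y"
  unfolding word_dist_def by simp

lemma word_dist_self: "x \<in> carrier G \<Longrightarrow> d x x = 0"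
  unfolding word_dist_def using word_length_one by simp

lemma word_dist_eq_0_iff: "x \<in> carrier G \<Longrightarrow> y \<in> carrier G \<Longrightarrow> d x y = 0 \<longleftrightarrow> x = y"
  unfolding word_dist_def using word_length_eq_0_iff[of "inv x \<otimes> y"]
  by (metis inv_closed inv_comm l_inv m_closed of_nat_eq_0_iff inv_equality)

lemma word_dist_sym:
  assumes "x \<in> carrier G" "y \<in> carrier G"
  shows "d x y = d y x"
proof -
  have "inv (inv x \<otimes> y) = inv y \<otimes> x"
    using assms by (simp add: inv_mult_group)
  then show ?thesis
    unfolding word_dist_def using word_length_inv[of "inv x \<otimes> y"] assms by simp
qed

lemma word_dist_triangle:
  assumes "x \<in> carrier G" "y \<in> carrier G" "z \<in> carrier G"
  shows "d x z \<le> d x y + d y z"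
proof -
  have "inv x \<otimes> z = (inv x \<otimes> y) \<otimes> (inv y \<otimes> z)"
    using assms by (simp add: m_assoc[symmetric]) (simp add: m_assoc r_inv)
  then show ?thesis
    unfolding word_dist_def using word_length_mult[of "inv x \<otimes> y" "inv y \<otimes> z"] assms by simp
qed

lemma word_dist_left_mult:
  assumes "g \<in> carrier G" "x \<in> carrier G" "y \<in> carrier G"
  shows "d (g \<otimes> x) (g \<otimes> y) = d x y"
proof -
  have "inv (g \<otimes> x) \<otimes> (g \<otimes> y) = inv x \<otimes> y"
    using assms by (simp add: inv_mult_group m_assoc) (simp add: m_assoc[symmetric])
  then show ?thesis
    unfolding word_dist_def by simp
qed

lemma word_dist_step_towards:
  assumes "z \<in> carrier G" "q \<in> carrier G" "d z q = real (Suc n)"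
  obtains z' where "z' \<in> carrier G" "d z z' \<le> 1" "d z' q \<le> real n"
proof -
  have "wl (inv z \<otimes> q) = Suc n"
    using assms(3) unfolding word_dist_def by linarith
  moreover obtain ws where "length ws = wl (inv z \<otimes> q)" "set ws \<subseteq> letters" "word_prod ws = inv z \<otimes> q"
    using word_length_attained[of "inv z \<otimes> q"] assms by blast
  ultimately have ws: "length ws = Suc n" "set ws \<subseteq> letters" "word_prod ws = inv z \<otimes> q"
    by simp_all
  then obtain a vs where a: "ws = a # vs"
    by (cases ws) auto
  have a_closed: "a \<in> carrier G" and vs_closed: "set vs \<subseteq> carrier G"
    using ws a letters_closed by auto
  have "inv z \<otimes> (z \<otimes> a) = a"
    using assms a_closed by (simp add: m_assoc[symmetric])
  then have "d z (z \<otimes> a) \<le> 1"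
    unfolding word_dist_def using word_length_le[of "[a]"] ws a a_closed by auto
  moreover have "inv (z \<otimes> a) \<otimes> q = word_prod vs"
  proof -
    have "inv (z \<otimes> a) \<otimes> q = inv a \<otimes> (a \<otimes> word_prod vs)"
      using assms a_closed ws a by (simp add: inv_mult_group m_assoc)
    then show ?thesis
      using a_closed word_prod_closed[OF vs_closed] by (simp add: m_assoc[symmetric])
  qed
  then have "d (z \<otimes> a) q \<le> real n"
    unfolding word_dist_def using word_length_le[of vs] ws a by auto
  ultimately show ?thesis
    using that assms a_closed by blast
qed

lemma geodesic_crossing:
  assumes p: "p \<in> carrier G" "P p" and q: "q \<in> carrier G" "Q q"
    and dichotomy: "\<And>z. z \<in> carrier G \<Longrightarrow> d p z + d z q = d p q \<Longrightarrow> P z \<or> Q z"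
  obtains z z' where "z \<in> carrier G" "z' \<in> carrier G" "P z" "Q z'" "d z z' \<le> 1"
proof -
  have "\<exists>z\<in>carrier G. \<exists>z'\<in>carrier G. P z \<and> Q z' \<and> d z z' \<le> 1"
    if "z \<in> carrier G" "d p z + d z q = d p q" "P z" "d z q = real n" for z n
    using that
  proof (induct n arbitrary: z)
    case 0
    then have "z = q"
      using q word_dist_eq_0_iff[of z q] by simp
    then show ?case
      using 0 q word_dist_self[of q] by (intro bexI[of _ q]) auto
  next
    case (Suc n)
    obtain z' where z': "z' \<in> carrier G" "d z z' \<le> 1" "d z' q \<le> real n"
      using word_dist_step_towards Suc.prems(1,4) q(1) by blast
    have "d p z' \<le> d p z + d z z'" "d p q \<le> d p z' + d z' q"
      using word_dist_triangle p q Suc.prems z' by auto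
    then have geodesic: "d p z' + d z' q = d p q" and "d z' q = real n"
      using Suc.prems z' by linarith+
    show ?case
    proof (cases "P z'")
      case True
      then show ?thesis using Suc.hyps z'(1) geodesic \<open>d z' q = real n\<close> by blast
    next
      case False
      then show ?thesis using dichotomy[OF z'(1) geodesic] Suc.prems z' by blast
    qed
  qed
  moreover have "d p q = real (wl (inv p \<otimes> q))"
    unfolding word_dist_def ..
  ultimately show ?thesis
    using that p q word_dist_self by fastforce
qed

lemma displacement_eq_word_length:
  "g \<in> carrier G \<Longrightarrow> x \<in> carrier G \<Longrightarrow> D g x = real (wl (inv x \<otimes> g \<otimes> x))"
  unfolding displacement_def word_dist_def by (simp add: m_assoc)

lemma displacement_move:
  assumes "g \<in> carrier G" "x \<in> carrier G" "y \<in> carrier G"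
  shows "D g y \<le> D g x + 2 * d x y"
proof -
  have "d y (g \<otimes> y) \<le> d y x + d x (g \<otimes> x) + d (g \<otimes> x) (g \<otimes> y)"
    using word_dist_triangle[of y x "g \<otimes> y"] word_dist_triangle[of x "g \<otimes> x" "g \<otimes> y"] assms by auto
  then show ?thesis
    unfolding displacement_def using word_dist_left_mult[of g x y] word_dist_sym[of y x] assms by auto
qed

lemma displacement_inv:
  assumes "g \<in> carrier G" "x \<in> carrier G"
  shows "D (inv g) x = D g x"
proof -
  have "d x (inv g \<otimes> x) = d (g \<otimes> x) (g \<otimes> (inv g \<otimes> x))"
    using word_dist_left_mult assms by simp
  also have "\<dots> = d x (g \<otimes> x)"
    using assms word_dist_sym by (simp add: m_assoc[symmetric])
  finally show ?thesis
    unfolding displacement_def .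
qed

lemma word_dist_pow_le:
  assumes "g \<in> carrier G" "x \<in> carrier G"
  shows "d x (g [^] k \<otimes> x) \<le> real k * D g x"
proof (induct k)
  case 0
  then show ?case using assms word_dist_self by simp
next
  case (Suc k)
  have "d x (g [^] Suc k \<otimes> x) \<le> d x (g [^] k \<otimes> x) + d (g [^] k \<otimes> x) (g [^] k \<otimes> (g \<otimes> x))"
    using word_dist_triangle assms by (simp add: m_assoc)
  also have "d (g [^] k \<otimes> x) (g [^] k \<otimes> (g \<otimes> x)) = D g x"
    unfolding displacement_def using word_dist_left_mult assms by simp
  finally show ?case
    using Suc by (simp add: algebra_simps)
qed

lemma gromov_product_sym: "x \<in> carrier G \<Longrightarrow> y \<in> carrier G \<Longrightarrow> gp w x y = gp w y x"
  unfolding gromov_product_def using word_dist_sym[of x y] by simp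

lemma gromov_product_left_mult:
  "g \<in> carrier G \<Longrightarrow> w \<in> carrier G \<Longrightarrow> x \<in> carrier G \<Longrightarrow> y \<in> carrier G \<Longrightarrow>
    gp (g \<otimes> w) (g \<otimes> x) (g \<otimes> y) = gp w x y"
  unfolding gromov_product_def by (simp add: word_dist_left_mult)

lemma gromov_product_self: "x \<in> carrier G \<Longrightarrow> gp x x y = 0"
  unfolding gromov_product_def by (simp add: word_dist_self)

lemma gromov_product_swap_add:
  "x \<in> carrier G \<Longrightarrow> y \<in> carrier G \<Longrightarrow> z \<in> carrier G \<Longrightarrow> gp y x z + gp x y z = d x y"
  unfolding gromov_product_def using word_dist_sym[of x y] word_dist_sym[of x z] word_dist_sym[of y z]
  by (simp add: field_simps)

lemma displacement_le_transl_length: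
  assumes R: "\<And>g. g \<in> carrier G \<Longrightarrow> wl g \<le> R * word_length G S' g"
    and \<gamma>: "\<gamma> \<in> carrier G" and C: "transl_length G S' \<gamma> \<le> C"
  shows "\<exists>p\<in>carrier G. D \<gamma> p \<le> real (R * C)"
proof -
  obtain g where g: "g \<in> carrier G" "word_length G S' (g \<otimes> \<gamma> \<otimes> inv g) = transl_length G S' \<gamma>"
    by (rule transl_length_attained)
  have "wl (g \<otimes> \<gamma> \<otimes> inv g) \<le> R * transl_length G S' \<gamma>"
    using R[of "g \<otimes> \<gamma> \<otimes> inv g"] g \<gamma> by simp
  also have "\<dots> \<le> R * C"
    using C by (rule mult_le_mono2)
  finally have "wl (g \<otimes> \<gamma> \<otimes> inv g) \<le> R * C" .
  then have "real (wl (g \<otimes> \<gamma> \<otimes> inv g)) \<le> real (R * C)"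
    by (rule of_nat_mono)
  moreover have "D \<gamma> (inv g) = real (wl (g \<otimes> \<gamma> \<otimes> inv g))"
    using displacement_eq_word_length[of \<gamma> "inv g"] g \<gamma> by simp
  ultimately have "D \<gamma> (inv g) \<le> real (R * C)"
    by linarith
  then show ?thesis
    using g(1) by blast
qed

lemma bounded_displacement_imp_out_equiv:
  fixes \<phi> :: "'i \<Rightarrow> 'a \<Rightarrow> 'a"
  assumes S: "finite S" and T: "finite T" "T \<subseteq> carrier G" "generate G T = carrier G"
    and "infinite (UNIV :: 'i set)"
    and hom: "\<And>n. \<phi> n \<in> hom G G"
    and bounded: "\<And>n. \<exists>x\<in>carrier G. \<forall>s\<in>T. D (\<phi> n s) x \<le> K"
  obtains m n where "m \<noteq> n" "out_equiv G (\<phi> m) (\<phi> n)"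
proof -
  have "\<forall>n. \<exists>x. x \<in> carrier G \<and> (\<forall>s\<in>T. D (\<phi> n s) x \<le> K)"
    using bounded by blast
  from choice[OF this] obtain X where X: "\<And>n. X n \<in> carrier G" "\<And>n s. s \<in> T \<Longrightarrow> D (\<phi> n s) (X n) \<le> K"
    by blast
  \<comment> \<open>Pigeonhole: conjugating by \<open>X n\<close> maps \<open>T\<close> into a fixed finite ball.\<close>
  define ball where "ball = {g \<in> carrier G. wl g \<le> nat \<lceil>K\<rceil>}"
  define F where "F n = (\<lambda>s\<in>T. inv (X n) \<otimes> \<phi> n s \<otimes> X n)" for n
  have "F n \<in> T \<rightarrow>\<^sub>E ball" for n
  proof -
    have "inv (X n) \<otimes> \<phi> n s \<otimes> X n \<in> ball" if s: "s \<in> T" for s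
    proof -
      have \<phi>s: "\<phi> n s \<in> carrier G"
        using hom_in_carrier[OF hom] s T(2) by blast
      then have "real (wl (inv (X n) \<otimes> \<phi> n s \<otimes> X n)) \<le> real (nat \<lceil>K\<rceil>)"
        using X(2)[OF s, of n] displacement_eq_word_length[OF \<phi>s X(1)[of n]] real_nat_ceiling_ge[of K]
        by linarith
      then show ?thesis
        unfolding ball_def using X(1) \<phi>s by simp
    qed
    then show ?thesis
      unfolding F_def by simp
  qed
  then have "range F \<subseteq> T \<rightarrow>\<^sub>E ball"
    by blast
  moreover have "finite (T \<rightarrow>\<^sub>E ball)"
    unfolding ball_def by (rule finite_PiE[OF T(1) finite_word_length_le[OF S]])
  ultimately have "finite (range F)"
    by (rule finite_subset)
  have "\<not> inj F"
  proof
    assume "inj F"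
    then have "finite (UNIV :: 'i set)"
      using \<open>finite (range F)\<close> by (simp add: finite_image_iff)
    then show False
      using \<open>infinite (UNIV :: 'i set)\<close> by blast
  qed
  then obtain m n where "m \<noteq> n" "F m = F n"
    unfolding inj_def by blast
  moreover have "out_equiv G (\<phi> m) (\<phi> n)"
  proof (rule out_equiv_if_conjugates_agree[OF hom hom X(1)[of m] X(1)[of n] T(2,3)])
    fix s assume "s \<in> T"
    then show "inv (X m) \<otimes> \<phi> m s \<otimes> X m = inv (X n) \<otimes> \<phi> n s \<otimes> X n"
      using fun_cong[OF \<open>F m = F n\<close>, of s] unfolding F_def by simp
  qed
  ultimately show ?thesis
    using that by blast
qed

end

lemma word_length_comparison:
  assumes "word_metric G S" "word_metric G S'" "finite S"
  obtains R :: nat where "\<And>g. g \<in> carrier G \<Longrightarrow> word_length G S' g \<le> R * word_length G S g"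
proof -
  interpret W: word_metric G S by fact
  interpret W': word_metric G S' by fact
  define R where "R = (\<Sum>l\<in>W.letters. W'.wl l)"
  have letter_bound: "W'.wl l \<le> R" if "l \<in> W.letters" for l
    unfolding R_def using member_le_sum[OF that, of W'.wl] assms(3) by simp
  have word_bound: "W'.wl (W.word_prod ws) \<le> R * length ws" if "set ws \<subseteq> W.letters" for ws
    using that
  proof (induct ws)
    case Nil
    then show ?case using W'.word_length_one by simp
  next
    case (Cons a ws)
    then have "a \<in> carrier G" "set ws \<subseteq> carrier G"
      using W.letters_closed by auto
    then have "W'.wl (W.word_prod (a # ws)) \<le> W'.wl a + W'.wl (W.word_prod ws)"
      using W'.word_length_mult W.word_prod_closed by simp
    then show ?case
      using Cons letter_bound[of a] by simp
  qed
  show ?thesis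
  proof (rule that)
    fix g assume "g \<in> carrier G"
    then obtain ws where "length ws = W.wl g" "set ws \<subseteq> W.letters" "W.word_prod ws = g"
      by (rule W.word_length_attained)
    then show "W'.wl g \<le> R * W.wl g"
      using word_bound[of ws] by simp
  qed
qed

section \<open>Hyperbolic word metrics\<close>

primrec alternating_product :: "('a, 'b) monoid_scheme \<Rightarrow> 'a \<Rightarrow> 'a \<Rightarrow> nat \<Rightarrow> 'a" where
  "alternating_product G a b 0 = \<one>\<^bsub>G\<^esub>"
| "alternating_product G a b (Suc n) = alternating_product G a b n \<otimes>\<^bsub>G\<^esub> (if even n then a else b)"

lemma (in group) alternating_product_closed:
  "a \<in> carrier G \<Longrightarrow> b \<in> carrier G \<Longrightarrow> alternating_product G a b n \<in> carrier G"
  by (induct n) auto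

lemma (in group) alternating_product_double:
  assumes "a \<in> carrier G" "b \<in> carrier G"
  shows "alternating_product G a b (2 * k) = (a \<otimes> b) [^] k"
  by (induct k) (simp_all add: assms m_assoc alternating_product_closed)

locale hyperbolic_word_metric = word_metric +
  fixes \<delta> :: real
  assumes four_point: "\<And>w x y z. w \<in> carrier G \<Longrightarrow> x \<in> carrier G \<Longrightarrow> y \<in> carrier G \<Longrightarrow> z \<in> carrier G \<Longrightarrow>
     gp w x z \<ge> min (gp w x y) (gp w y z) - \<delta>"
begin

lemma delta_nonneg: "0 \<le> \<delta>"
  using four_point[of \<one> \<one> \<one> \<one>] gromov_product_self[of \<one>] by simp

context
  fixes y :: "nat \<Rightarrow> 'a" and A c :: real
  assumes chain_closed: "\<And>i. y i \<in> carrier G"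
    and long_steps: "\<And>i. A \<le> d (y i) (y (Suc i))"
    and small_angles: "\<And>i. gp (y (Suc i)) (y i) (y (Suc (Suc i))) \<le> c"
    and c_nonneg: "0 \<le> c" and A_large: "2 * c + 2 * \<delta> < A"
begin

lemma chain_gromov_product_le: "gp (y n) (y 0) (y (Suc n)) \<le> c + \<delta>"
proof (induct n)
  case 0
  then show ?case using gromov_product_self chain_closed c_nonneg delta_nonneg by simp
next
  case (Suc n)
  have "gp (y (Suc n)) (y n) (y 0) + gp (y n) (y (Suc n)) (y 0) = d (y n) (y (Suc n))"
    using gromov_product_swap_add chain_closed by blast
  moreover have "gp (y n) (y (Suc n)) (y 0) = gp (y n) (y 0) (y (Suc n))"
    using gromov_product_sym chain_closed by blast
  ultimately have "gp (y (Suc n)) (y n) (y 0) \<ge> A - c - \<delta>"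
    using long_steps[of n] Suc by linarith
  moreover have "gp (y (Suc n)) (y n) (y (Suc (Suc n))) \<ge>
      min (gp (y (Suc n)) (y n) (y 0)) (gp (y (Suc n)) (y 0) (y (Suc (Suc n)))) - \<delta>"
    using four_point chain_closed by blast
  ultimately show ?case
    using small_angles[of n] A_large by (simp add: min_def split: if_splits)
qed

lemma chain_dist_ge: "real n * (A - 2 * c - 2 * \<delta>) \<le> d (y 0) (y n)"
proof (induct n)
  case 0
  then show ?case using word_dist_nonneg by simp
next
  case (Suc n)
  have "d (y 0) (y (Suc n)) = d (y n) (y 0) + d (y n) (y (Suc n)) - 2 * gp (y n) (y 0) (y (Suc n))"
    unfolding gromov_product_def by (simp add: field_simps)
  then show ?case
    using chain_gromov_product_le[of n] long_steps[of n] Suc word_dist_sym[of "y n" "y 0"] chain_closed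
    by (simp add: algebra_simps)
qed

end

lemma ping_pong_dist_ge:
  assumes ab: "a \<in> carrier G" "b \<in> carrier G" and x: "x \<in> carrier G"
    and Aa: "A \<le> D a x" and Ab: "A \<le> D b x"
    and c1: "gp x (inv a \<otimes> x) (b \<otimes> x) \<le> c" and c2: "gp x (inv b \<otimes> x) (a \<otimes> x) \<le> c"
    and c_nonneg: "0 \<le> c" and A_large: "2 * c + 2 * \<delta> < A"
  shows "real (2 * k) * (A - 2 * c - 2 * \<delta>) \<le> d x ((a \<otimes> b) [^] k \<otimes> x)"
proof -
  define h where "h = alternating_product G a b"
  define letter where "letter i = (if even (i::nat) then a else b)" for i
  define y where "y i = h i \<otimes> x" for i
  have h_closed: "h i \<in> carrier G" for i
    using alternating_product_closed ab h_def by blast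
  have letter_closed: "letter i \<in> carrier G" for i
    using ab letter_def by simp
  have h_Suc: "h (Suc i) = h i \<otimes> letter i" for i
    unfolding h_def letter_def by simp
  have "A \<le> d (y i) (y (Suc i))" for i
  proof -
    have "d (y i) (y (Suc i)) = d (h i \<otimes> x) (h i \<otimes> (letter i \<otimes> x))"
      unfolding y_def h_Suc using h_closed letter_closed x by (simp add: m_assoc)
    also have "\<dots> = D (letter i) x"
      unfolding displacement_def using word_dist_left_mult h_closed letter_closed x by simp
    finally show ?thesis
      using Aa Ab letter_def by simp
  qed
  moreover have "gp (y (Suc i)) (y i) (y (Suc (Suc i))) \<le> c" for i
  proof -
    have "y i = h (Suc i) \<otimes> (inv (letter i) \<otimes> x)"
      unfolding y_def h_Suc using h_closed letter_closed x
      by (simp add: m_assoc[symmetric]) (simp add: m_assoc)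
    moreover have "y (Suc (Suc i)) = h (Suc i) \<otimes> (letter (Suc i) \<otimes> x)"
      unfolding y_def using h_Suc[of "Suc i"] h_closed letter_closed x by (simp add: m_assoc)
    ultimately have "gp (y (Suc i)) (y i) (y (Suc (Suc i))) = gp x (inv (letter i) \<otimes> x) (letter (Suc i) \<otimes> x)"
      using gromov_product_left_mult h_closed letter_closed x by (simp add: y_def)
    then show ?thesis
      using c1 c2 letter_def by (cases "even i") auto
  qed
  moreover have "y i \<in> carrier G" for i
    using h_closed x y_def by simp
  ultimately have "real (2 * k) * (A - 2 * c - 2 * \<delta>) \<le> d (y 0) (y (2 * k))"
    using chain_dist_ge c_nonneg A_large by blast
  then show ?thesis
    unfolding y_def h_def using alternating_product_double ab x by simp
qed

lemma ping_pong_displacement_ge: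
  assumes ab: "a \<in> carrier G" "b \<in> carrier G" and x: "x \<in> carrier G"
    and Aa: "A \<le> D a x" and Ab: "A \<le> D b x"
    and c1: "gp x (inv a \<otimes> x) (b \<otimes> x) \<le> c" and c2: "gp x (inv b \<otimes> x) (a \<otimes> x) \<le> c"
    and c_nonneg: "0 \<le> c" and A_large: "2 * c + 2 * \<delta> < A"
    and p: "p \<in> carrier G"
  shows "2 * (A - 2 * c - 2 * \<delta>) \<le> D (a \<otimes> b) p"
proof (rule ccontr)
  \<comment> \<open>\<open>d x ((ab)\<^sup>k x)\<close> grows like \<open>2k(A - 2c - 2\<delta>)\<close> but is at most \<open>2 d x p + k D (ab) p\<close>.\<close>
  let ?g = "a \<otimes> b"
  assume "\<not> 2 * (A - 2 * c - 2 * \<delta>) \<le> D ?g p"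
  then have e: "0 < 2 * (A - 2 * c - 2 * \<delta>) - D ?g p"
    by simp
  obtain k where k: "2 * d x p < real k * (2 * (A - 2 * c - 2 * \<delta>) - D ?g p)"
    using reals_Archimedean3[OF e] by blast
  have "real (2 * k) * (A - 2 * c - 2 * \<delta>) \<le> d x (?g [^] k \<otimes> x)"
    using ping_pong_dist_ge assms by blast
  also have "\<dots> \<le> d x p + d p (?g [^] k \<otimes> p) + d (?g [^] k \<otimes> p) (?g [^] k \<otimes> x)"
    using word_dist_triangle[of x p "?g [^] k \<otimes> x"] word_dist_triangle[of p "?g [^] k \<otimes> p" "?g [^] k \<otimes> x"] ab x p by simp
  also have "d (?g [^] k \<otimes> p) (?g [^] k \<otimes> x) = d x p"
    using word_dist_left_mult word_dist_sym ab x p by simp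
  also have "d p (?g [^] k \<otimes> p) \<le> real k * D ?g p"
    using word_dist_pow_le ab p by simp
  finally show False
    using k by (simp add: algebra_simps)
qed

lemma gromov_product_inv_orbit_ge:
  assumes g: "g \<in> carrier G" and x: "x \<in> carrier G" and p: "p \<in> carrier G"
  shows "gp x (inv g \<otimes> x) p \<ge> (D g x - D g p) / 2"
proof -
  have "d (inv g \<otimes> x) p = d x (g \<otimes> p)"
    using word_dist_left_mult[of g "inv g \<otimes> x" p] g x p by (simp add: m_assoc[symmetric])
  also have "\<dots> \<le> d x p + D g p"
    unfolding displacement_def using word_dist_triangle g x p by simp
  finally have "d (inv g \<otimes> x) p \<le> d x p + D g p" .
  moreover have "d x (inv g \<otimes> x) = D g x"
    using displacement_inv g x unfolding displacement_def by simp
  ultimately show ?thesis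
    unfolding gromov_product_def by simp
qed

lemma gromov_product_orbit_ge:
  assumes "g \<in> carrier G" "x \<in> carrier G" "p \<in> carrier G"
  shows "gp x (g \<otimes> x) p \<ge> (D g x - D g p) / 2"
  using gromov_product_inv_orbit_ge[of "inv g" x p] assms displacement_inv by simp

lemma gromov_product_opposite_sides_le:
  assumes "x \<in> carrier G" "p \<in> carrier G" "q \<in> carrier G" "u \<in> carrier G" "v \<in> carrier G"
    and "gp x p q = 0" and "2 * \<delta> < gp x u p" and "2 * \<delta> < gp x v q"
  shows "gp x u v \<le> 2 * \<delta>"
proof -
  have "gp x p q \<ge> min (gp x p u) (gp x u q) - \<delta>" "gp x u q \<ge> min (gp x u v) (gp x v q) - \<delta>"
    using four_point assms(1-5) by simp_all
  moreover have "gp x p u = gp x u p"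
    using gromov_product_sym assms(2,4) by simp
  ultimately show ?thesis
    using assms(6-8) delta_nonneg by (simp add: min_def split: if_splits)
qed

text \<open>If both \<open>a\<close> and \<open>b\<close> moved \<open>x\<close> far, then \<open>a\<^sup>-\<^sup>1x\<close> and \<open>ax\<close> would lie towards \<open>p\<close>, while
  \<open>bx\<close> and \<open>b\<^sup>-\<^sup>1x\<close> lie towards \<open>q\<close>; the Gromov products at \<open>x\<close> are then small, and ping-pong
  forces \<open>ab\<close> to move every point far.\<close>

lemma displacement_dichotomy:
  assumes ab: "a \<in> carrier G" "b \<in> carrier G" and pqx: "p \<in> carrier G" "q \<in> carrier G" "x \<in> carrier G"
    and Dp: "D a p \<le> K" and Dq: "D b q \<le> K" and geodesic: "d p x + d x q = d p q"
    and r: "r \<in> carrier G" and L: "D (a \<otimes> b) r \<le> L"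
  shows "D a x \<le> max (K + 4 * \<delta>) (L / 2 + 6 * \<delta>) \<or> D b x \<le> max (K + 4 * \<delta>) (L / 2 + 6 * \<delta>)"
proof (rule ccontr)
  let ?M = "max (K + 4 * \<delta>) (L / 2 + 6 * \<delta>)"
  assume "\<not> (D a x \<le> ?M \<or> D b x \<le> ?M)"
  then have far: "D a x > ?M" "D b x > ?M"
    by auto
  have gp_pq: "gp x p q = 0"
    unfolding gromov_product_def using geodesic word_dist_sym[of x p] pqx by simp
  have c1: "gp x (inv a \<otimes> x) (b \<otimes> x) \<le> 2 * \<delta>"
    using gromov_product_inv_orbit_ge[of a x p] gromov_product_orbit_ge[of b x q] ab pqx Dp Dq far
    by (intro gromov_product_opposite_sides_le[OF pqx(3,1,2) _ _ gp_pq]) simp_all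
  have "gp x (a \<otimes> x) (inv b \<otimes> x) \<le> 2 * \<delta>"
    using gromov_product_orbit_ge[of a x p] gromov_product_inv_orbit_ge[of b x q] ab pqx Dp Dq far
    by (intro gromov_product_opposite_sides_le[OF pqx(3,1,2) _ _ gp_pq]) simp_all
  then have c2: "gp x (inv b \<otimes> x) (a \<otimes> x) \<le> 2 * \<delta>"
    using gromov_product_sym ab pqx(3) by simp
  have "0 \<le> L"
    using L word_dist_nonneg order_trans unfolding displacement_def by blast
  then have "2 * (2 * \<delta>) + 2 * \<delta> < min (D a x) (D b x)"
    using far by simp
  then have "2 * (min (D a x) (D b x) - 2 * (2 * \<delta>) - 2 * \<delta>) \<le> D (a \<otimes> b) r"
    using ping_pong_displacement_ge[OF ab pqx(3) _ _ c1 c2 _ _ r] delta_nonneg by simp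
  moreover have "L / 2 + 6 * \<delta> < min (D a x) (D b x)"
    using far by simp
  ultimately show False
    using L by (auto simp: algebra_simps)
qed

lemma common_almost_fixed_point:
  assumes "finite T" "T \<subseteq> carrier G" "0 \<le> L"
    and fixed: "\<forall>a\<in>T. \<exists>p\<in>carrier G. D a p \<le> L"
    and pairs: "\<forall>a\<in>T. \<forall>a'\<in>T. a \<noteq> a' \<longrightarrow> (\<exists>r\<in>carrier G. D (a \<otimes> a') r \<le> L)"
  shows "\<exists>x\<in>carrier G. \<forall>a\<in>T. D a x \<le> L + real (card T) * (L + 6 * \<delta> + 2)"
  using assms(1,2) fixed pairs
proof (induct T rule: finite_induct)
  case empty
  then show ?case by blast
next
  case (insert a T)
  define K where "K = L + real (card T) * (L + 6 * \<delta> + 2)"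
  define M where "M = max (K + 4 * \<delta>) (L / 2 + 6 * \<delta>)"
  have "0 \<le> real (card T) * (L + 6 * \<delta> + 2)"
    using \<open>0 \<le> L\<close> delta_nonneg by simp
  then have L_le_K: "L \<le> K"
    unfolding K_def by linarith
  have K_le_M: "K \<le> M"
    unfolding M_def using delta_nonneg by simp
  have a_closed: "a \<in> carrier G" and T_closed: "T \<subseteq> carrier G"
    using insert.prems(1) by auto
  have "\<forall>b\<in>T. \<exists>p\<in>carrier G. D b p \<le> L"
    "\<forall>b\<in>T. \<forall>b'\<in>T. b \<noteq> b' \<longrightarrow> (\<exists>r\<in>carrier G. D (b \<otimes> b') r \<le> L)"
    using insert.prems(2,3) by simp_all
  then obtain q where q: "q \<in> carrier G" "\<forall>b\<in>T. D b q \<le> K"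
    using insert.hyps(3)[OF T_closed] unfolding K_def by blast
  obtain p where p: "p \<in> carrier G" "D a p \<le> L"
    using insert.prems(2) by blast
  have dichotomy: "D a z \<le> M \<or> (\<forall>b\<in>T. D b z \<le> M)"
    if z: "z \<in> carrier G" "d p z + d z q = d p q" for z
  proof (cases "D a z \<le> M")
    case far: False
    have "\<forall>b\<in>T. D b z \<le> M"
    proof
      fix b assume b: "b \<in> T"
      have "a \<noteq> b"
        using insert.hyps(2) b by blast
      then obtain r where r: "r \<in> carrier G" "D (a \<otimes> b) r \<le> L"
        using insert.prems(3) b by (meson insertCI)
      have b_closed: "b \<in> carrier G"
        using b T_closed by blast
      have Dap: "D a p \<le> K"
        using p(2) L_le_K by linarith
      have Dbq: "D b q \<le> K"
        using q(2) b by blast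
      have "D a z \<le> M \<or> D b z \<le> M"
        unfolding M_def by (rule displacement_dichotomy[OF a_closed b_closed p(1) q(1) z(1) Dap Dbq z(2) r])
      then show "D b z \<le> M"
        using far by simp
    qed
    then show ?thesis
      by simp
  qed simp
  have start: "D a p \<le> M"
    using p(2) L_le_K K_le_M by linarith
  have target: "\<forall>b\<in>T. D b q \<le> M"
  proof
    fix b assume "b \<in> T"
    then show "D b q \<le> M"
      using q(2) K_le_M by fastforce
  qed
  \<comment> \<open>Walk from the almost fixed point of \<open>a\<close> to the common one of \<open>T\<close>.\<close>
  obtain z z' where z: "z \<in> carrier G" "z' \<in> carrier G" "D a z \<le> M" "\<forall>b\<in>T. D b z' \<le> M" "d z z' \<le> 1"
    by (rule geodesic_crossing[of p "\<lambda>z. D a z \<le> M" q "\<lambda>z. \<forall>b\<in>T. D b z \<le> M",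
          OF p(1) start q(1) target dichotomy])
  have near: "D b z \<le> M + 2" if b: "b \<in> insert a T" for b
  proof (cases "b = a")
    case True
    then show ?thesis
      using z(3) by simp
  next
    case False
    then have "b \<in> T" "b \<in> carrier G"
      using b T_closed by auto
    then have "D b z \<le> D b z' + 2 * d z' z" "D b z' \<le> M"
      using displacement_move z(1,2,4) by auto
    then show ?thesis
      using z(5) word_dist_sym[OF z(1,2)] by linarith
  qed
  have "M + 2 \<le> L + real (card (insert a T)) * (L + 6 * \<delta> + 2)"
  proof -
    have "M \<le> K + L + 6 * \<delta>"
      unfolding M_def using \<open>0 \<le> L\<close> L_le_K delta_nonneg by simp
    moreover have "card (insert a T) = Suc (card T)"
      using insert.hyps by simp
    ultimately show ?thesis
      unfolding K_def by (simp add: algebra_simps)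
  qed
  then have "\<forall>b\<in>insert a T. D b z \<le> L + real (card (insert a T)) * (L + 6 * \<delta> + 2)"
    using near by fastforce
  then show ?case
    using z(1) by blast
qed

lemma hom_common_almost_fixed_point:
  assumes f: "f \<in> hom G G" and T: "finite T" "T \<subseteq> carrier G" and "0 \<le> L"
    and test_set: "\<forall>b\<in>test_set_B G T. \<exists>p\<in>carrier G. D (f b) p \<le> L"
  shows "\<exists>x\<in>carrier G. \<forall>s\<in>T. D (f s) x \<le> L + real (card T) * (L + 6 * \<delta> + 2)"
proof -
  have pairs: "\<forall>a\<in>f ` T. \<forall>a'\<in>f ` T. a \<noteq> a' \<longrightarrow> (\<exists>r\<in>carrier G. D (a \<otimes> a') r \<le> L)"
  proof (intro ballI impI)
    fix a a' assume "a \<in> f ` T" "a' \<in> f ` T" "a \<noteq> a'"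
    then obtain s s' where ss': "s \<in> T" "s' \<in> T" "a = f s" "a' = f s'" "s \<noteq> s'"
      by blast
    then have "s \<otimes> s' \<in> test_set_B G T"
      unfolding test_set_B_def by blast
    then obtain r where "r \<in> carrier G" "D (f (s \<otimes> s')) r \<le> L"
      using test_set by blast
    moreover have "f (s \<otimes> s') = a \<otimes> a'"
      using hom_mult[OF f] ss' T by auto
    ultimately show "\<exists>r\<in>carrier G. D (a \<otimes> a') r \<le> L"
      by auto
  qed
  have "T \<subseteq> test_set_B G T"
    unfolding test_set_B_def by blast
  then have fixed: "\<forall>a\<in>f ` T. \<exists>p\<in>carrier G. D a p \<le> L"
    using test_set by blast
  have "f ` T \<subseteq> carrier G"
    using hom_in_carrier[OF f] T by auto
  then obtain x where x: "x \<in> carrier G"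
    "\<forall>a\<in>f ` T. D a x \<le> L + real (card (f ` T)) * (L + 6 * \<delta> + 2)"
    using common_almost_fixed_point[OF finite_imageI[OF T(1)] _ \<open>0 \<le> L\<close> fixed pairs] by blast
  have card_bound: "real (card (f ` T)) * (L + 6 * \<delta> + 2) \<le> real (card T) * (L + 6 * \<delta> + 2)"
    using card_image_le[OF T(1), of f] \<open>0 \<le> L\<close> delta_nonneg by (intro mult_right_mono) simp_all
  have "D (f s) x \<le> L + real (card T) * (L + 6 * \<delta> + 2)" if "s \<in> T" for s
  proof -
    have "D (f s) x \<le> L + real (card (f ` T)) * (L + 6 * \<delta> + 2)"
      using x(2) that by blast
    then show ?thesis
      using card_bound by linarith
  qed
  then show ?thesis
    using x(1) by blast
qed

end

lemma bounded_if_limsup_neq_infinity: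
  fixes f :: "nat \<Rightarrow> nat"
  assumes "limsup (\<lambda>n. ereal (real (f n))) \<noteq> \<infinity>"
  obtains C where "\<And>n. f n \<le> C"
proof -
  obtain r where "limsup (\<lambda>n. ereal (real (f n))) < ereal r"
    using assms less_PInf_Ex_of_nat by (metis less_ereal.simps(1) of_nat_less_iff top.not_eq_extremum)
  then have "eventually (\<lambda>n. ereal (real (f n)) < ereal r) sequentially"
    by (rule Limsup_lessD)
  then obtain N where N: "\<And>n. n \<ge> N \<Longrightarrow> real (f n) < r"
    by (auto simp: eventually_sequentially)
  have "f n \<le> nat \<lceil>r\<rceil> + (\<Sum>i<N. f i)" for n
  proof (cases "n < N")
    case True
    then show ?thesis
      using member_le_sum[of n "{..<N}" f] by simp
  next
    case False
    then have "real (f n) < r"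
      using N by simp
    then have "f n \<le> nat \<lceil>r\<rceil>"
      by linarith
    then show ?thesis
      by simp
  qed
  then show ?thesis
    using that by blast
qed

lemma uniform_bound_if_limsup_neq_infinity:
  fixes f :: "nat \<Rightarrow> 'b \<Rightarrow> nat"
  assumes "finite B" "\<And>b. b \<in> B \<Longrightarrow> limsup (\<lambda>n. ereal (real (f n b))) \<noteq> \<infinity>"
  obtains C where "\<And>b n. b \<in> B \<Longrightarrow> f n b \<le> C"
proof -
  have "\<exists>C. \<forall>n. f n b \<le> C" if "b \<in> B" for b
    using bounded_if_limsup_neq_infinity[OF assms(2)[OF that]] by blast
  then obtain c where c: "\<And>b n. b \<in> B \<Longrightarrow> f n b \<le> c b"
    by metis
  have "f n b \<le> (\<Sum>b\<in>B. c b)" if "b \<in> B" for b n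
    using c[OF that, of n] member_le_sum[OF that, of c] assms(1) by simp
  then show ?thesis
    using that by blast
qed

lemma (in group) test_set_B_closed: "S \<subseteq> carrier G \<Longrightarrow> test_set_B G S \<subseteq> carrier G"
  unfolding test_set_B_def by auto

lemma finite_test_set_B: "finite S \<Longrightarrow> finite (test_set_B G S)"
proof -
  assume "finite S"
  moreover have "test_set_B G S \<subseteq> S \<union> (\<lambda>(s, s'). s \<otimes>\<^bsub>G\<^esub> s') ` (S \<times> S)"
    unfolding test_set_B_def by auto
  ultimately show ?thesis
    by (simp add: finite_subset)
qed

lemma hyperbolic_groupE:
  assumes "hyperbolic_group G"
  obtains S \<delta> where "hyperbolic_word_metric G S \<delta>" "finite S"
proof -
  obtain S \<delta> where G: "group G" "finite_generating_set G S"
    and four_point: "\<forall>w\<in>carrier G. \<forall>x\<in>carrier G. \<forall>y\<in>carrier G. \<forall>z\<in>carrier G.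
        gromov_product G S w x z \<ge> min (gromov_product G S w x y) (gromov_product G S w y z) - \<delta>"
    using assms unfolding hyperbolic_group_def by blast
  then have "hyperbolic_word_metric G S \<delta>"
    unfolding hyperbolic_word_metric_def hyperbolic_word_metric_axioms_def word_metric_def
      word_metric_axioms_def finite_generating_set_def
    by blast
  then show ?thesis
    using that G(2) unfolding finite_generating_set_def by blast
qed

theorem mainTheorem5:
  fixes G :: "('a, 'b) monoid_scheme" and S :: "'a set" and \<phi> :: "nat \<Rightarrow> 'a \<Rightarrow> 'a"
  assumes "hyperbolic_group G"
    and "infinite (Out G)"
    and "finite_generating_set G S"
    and "\<And>n. \<phi> n \<in> iso G G"
    and "\<And>m n. m \<noteq> n \<Longrightarrow> \<not> out_equiv G (\<phi> m) (\<phi> n)"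
  shows "\<exists>b\<in>test_set_B G S. limsup (\<lambda>n. ereal (real (transl_length G S (\<phi> n b)))) = \<infinity>"
proof (rule ccontr)
  assume no_witness: "\<not> ?thesis"
  have S: "finite S" "S \<subseteq> carrier G" "generate G S = carrier G"
    using assms(3) unfolding finite_generating_set_def by auto
  have hom: "\<phi> n \<in> hom G G" for n
    using assms(4) by (simp add: iso_def)
  obtain C where C: "\<And>b n. b \<in> test_set_B G S \<Longrightarrow> transl_length G S (\<phi> n b) \<le> C"
    using uniform_bound_if_limsup_neq_infinity[OF finite_test_set_B[OF S(1)],
        where f = "\<lambda>n b. transl_length G S (\<phi> n b)"] no_witness by blast
  obtain S0 \<delta> where "hyperbolic_word_metric G S0 \<delta>" "finite S0"
    using hyperbolic_groupE[OF assms(1)] .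
  then interpret H: hyperbolic_word_metric G S0 \<delta>
    by simp
  obtain R where R: "\<And>g. g \<in> carrier G \<Longrightarrow> word_length G S0 g \<le> R * word_length G S g"
    using word_length_comparison[OF word_metric.intro[OF H.is_group word_metric_axioms.intro[OF S(2,3)]]
        H.word_metric_axioms S(1)] by blast
  have "\<exists>p\<in>carrier G. displacement G S0 (\<phi> n b) p \<le> real (R * C)" if "b \<in> test_set_B G S" for n b
    using H.displacement_le_transl_length[OF R _ C[OF that]] hom_in_carrier[OF hom]
      H.test_set_B_closed[OF S(2)] that by blast
  then have "\<exists>x\<in>carrier G. \<forall>s\<in>S.
      displacement G S0 (\<phi> n s) x \<le> real (R * C) + real (card S) * (real (R * C) + 6 * \<delta> + 2)" for n
    by (intro H.hom_common_almost_fixed_point[OF hom S(1,2)]) auto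
  then obtain m n where "m \<noteq> n" "out_equiv G (\<phi> m) (\<phi> n)"
    by (rule H.bounded_displacement_imp_out_equiv[OF \<open>finite S0\<close> S infinite_UNIV_nat hom])
  then show False
    using assms(5) by blast
qed

end
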